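(* Let $\mathcal{X}$ be an input space and $X$ a random input in $\mathcal{X}$. Let $u_1,\dots,u_K$ be fixed probability densities on $[0,1]$ and $\gamma,\rho:\mathcal{X}\to\{1,\dots,K\}$ fixed maps. Let $S\in[0,1]$ and $C\in[0,1]$ be random variables such that conditionally on $X=x$, $S$ has density $u_{\gamma(x)}$, $C$ has density $u_{\rho(x)}$, and $S$ and $C$ are conditionally independent given $X$. Let $Y=\mathbf{1}[C\ge \tfrac12]$. Let $x_1,\dots,x_N$ be i.i.d. copies of $X$, let $I_1,\dots,I_M$ be intervals partitioning $[0,1]$, and fix $m$ with $P(S\in I_m)>0$. Define $$\hat r_m=\frac{\frac1N\sum_{n=1}^N P(S\in I_m\mid X=x_n)\,P(C\ge \tfrac12\mid X=x_n)}{\frac1N\sum_{n=1}^N P(S\in I_m\mid X=x_n)}.$$ Then $\hat r_m$ is a consistent estimator of $\mathbb{E}[Y\mid S\in I_m]$ as $N\to\infty$.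
   Context: This models calibration estimation with uncertain ground-truth labels: instead of binary labels, one observes for each sample a confidence distribution $u_{\rho(x_n)}$ (from a certainty phrase in the ground-truth text), and the latent label is $Y=\mathbf{1}[C\ge 1/2]$ with $C$ drawn from that distribution. Here $P(S\in I_m\mid X=x_n)=\int_{I_m}u_{\gamma(x_n)}(s)\,ds$ and $P(C\ge\tfrac12\mid X=x_n)=\int_{1/2}^1 u_{\rho(x_n)}(c)\,dc$. *)

theory Defs
  imports "HOL-Probability.Probability"
begin

definition density_on_unit :: "(real \<Rightarrow> real) \<Rightarrow> bool" where
  "density_on_unit f \<longleftrightarrow> f \<in> borel_measurable borel \<and> (\<forall>s. 0 \<le> f s)
     \<and> set_integrable lborel {0..1} f \<and> (LBINT s:{0..1}. f s) = 1"

text \<open>P(S in J | X = x) for a set J (S has conditional density u (gam x) on [0,1]).\<close>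
definition cond_prob_S :: "(nat \<Rightarrow> real \<Rightarrow> real) \<Rightarrow> ('x \<Rightarrow> nat) \<Rightarrow> real set \<Rightarrow> 'x \<Rightarrow> real" where
  "cond_prob_S u gam J x = (LBINT s:(J \<inter> {0..1}). u (gam x) s)"

definition cond_prob_Cpos :: "(nat \<Rightarrow> real \<Rightarrow> real) \<Rightarrow> ('x \<Rightarrow> nat) \<Rightarrow> 'x \<Rightarrow> real" where
  "cond_prob_Cpos u rho x = (LBINT c:{1/2..1}. u (rho x) c)"

definition r_hat :: "(nat \<Rightarrow> real \<Rightarrow> real) \<Rightarrow> ('x \<Rightarrow> nat) \<Rightarrow> ('x \<Rightarrow> nat) \<Rightarrow> real set
    \<Rightarrow> (nat \<Rightarrow> 'x) \<Rightarrow> nat \<Rightarrow> real" where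
  "r_hat u gam rho J xs N =
     ((1 / real N) * (\<Sum>n<N. cond_prob_S u gam J (xs n) * cond_prob_Cpos u rho (xs n)))
     / ((1 / real N) * (\<Sum>n<N. cond_prob_S u gam J (xs n)))"

definition label_Y :: "('w \<Rightarrow> real) \<Rightarrow> 'w \<Rightarrow> real" where
  "label_Y C w = (if C w \<ge> 1/2 then 1 else 0)"

definition cond_exp_Y_given_bin :: "'w measure \<Rightarrow> ('w \<Rightarrow> real) \<Rightarrow> ('w \<Rightarrow> real) \<Rightarrow> real set \<Rightarrow> real" where
  "cond_exp_Y_given_bin M S C J =
     (\<integral>w. indicator {w \<in> space M. S w \<in> J} w * label_Y C w \<partial>M) / measure M {w \<in> space M. S w \<in> J}"

end

theory Submission
  imports Defs "HOL-Real_Asymp.Real_Asymp"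
begin

text \<open>
  Conditional independence of S and C given X turns the bin probability P(S \<in> I_m) and the
  joint probability P(S \<in> I_m, C \<ge> 1/2) into the expectations E[a(X)] and E[a(X) b(X)], where
  a and b are the conditional probabilities in the numerator and denominator of \<open>r_hat\<close>.
  Both are sample means of i.i.d. variables with values in [0,1], so Hoeffding's inequality makes
  them converge in probability; since E[a(X)] = P(S \<in> I_m) > 0, so does their quotient.
\<close>

definition tendsto_in_prob :: "'w measure \<Rightarrow> (nat \<Rightarrow> 'w \<Rightarrow> real) \<Rightarrow> real \<Rightarrow> bool" where
  "tendsto_in_prob M Z c \<longleftrightarrow>
     (\<forall>e>0. (\<lambda>N. measure M {w \<in> space M. \<bar>Z N w - c\<bar> > e}) \<longlonglongrightarrow> 0)"

lemma tendsto_in_prob_sample_mean: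
  fixes M :: "'w measure" and Xsp :: "'x measure" and h :: "'x \<Rightarrow> real"
  assumes P: "prob_space M"
    and X_meas: "X \<in> measurable M Xsp"
    and Xs_meas: "\<And>n. Xs n \<in> measurable M Xsp"
    and Xs_indep: "prob_space.indep_vars M (\<lambda>_. Xsp) Xs UNIV"
    and Xs_dist: "\<And>n. distr M Xsp (Xs n) = distr M Xsp X"
    and h_meas: "h \<in> borel_measurable Xsp"
    and h_range: "\<And>x. x \<in> space Xsp \<Longrightarrow> h x \<in> {a..b}" and ab: "a < b"
  shows "tendsto_in_prob M (\<lambda>N w. (\<Sum>n<N. h (Xs n w)) / real N) (\<integral>x. h x \<partial>distr M Xsp X)"
  unfolding tendsto_in_prob_def
proof (intro allI impI)
  fix e :: real assume e: "e > 0"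
  interpret prob_space M by (rule P)
  let ?\<mu> = "\<integral>x. h x \<partial>distr M Xsp X"
  let ?dev = "\<lambda>N w. \<bar>(\<Sum>n<N. h (Xs n w)) / real N - ?\<mu>\<bar>"
  have \<mu>: "?\<mu> = expectation (\<lambda>w. h (X w))"
    by (rule integral_distr[OF X_meas h_meas])
  have indep: "indep_vars (\<lambda>_. borel) (\<lambda>n w. h (Xs n w)) UNIV"
    by (rule indep_vars_compose2[OF Xs_indep]) (use h_meas in auto)
  have distr_h: "distr M borel (\<lambda>w. h (Y w)) = distr (distr M Xsp Y) borel h"
    if "Y \<in> measurable M Xsp" for Y
    using distr_distr[OF h_meas that] by (simp add: comp_def)
  have Hoeffding: "measure M {w \<in> space M. ?dev N w \<ge> e} \<le> 2 * exp (-2 * real N * e\<^sup>2 / (b - a)\<^sup>2)"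
    if N: "N > 0" for N
  proof -
    interpret Hoeffding_ineq_iid M "{..<N}" "\<lambda>n w. h (Xs n w)" "\<lambda>w. h (X w)" a b
      "expectation (\<lambda>w. h (X w))"
    proof unfold_locales
      show "indep_vars (\<lambda>_. borel) (\<lambda>n w. h (Xs n w)) {..<N}"
        by (rule indep_vars_subset[OF indep]) auto
      show "distr M borel (\<lambda>w. h (Xs i w)) = distr M borel (\<lambda>w. h (X w))" for i
        by (simp add: distr_h[OF Xs_meas] distr_h[OF X_meas] Xs_dist)
      show "random_variable borel (\<lambda>w. h (X w))"
        using measurable_compose[OF X_meas h_meas] by (simp add: comp_def)
      show "AE w in M. h (X w) \<in> {a..b}"
        using h_range measurable_space[OF X_meas] by auto
    qed simp_all
    show ?thesis
      using Hoeffding_ineq_abs_ge'[of e] e ab N by (simp add: \<mu> lessThan_empty_iff)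
  qed
  have bound_lim: "(\<lambda>N. 2 * exp (-2 * real N * e\<^sup>2 / (b - a)\<^sup>2)) \<longlonglongrightarrow> 0"
    using e ab by real_asymp
  note [measurable] = Xs_meas
  have strict_le: "measure M {w \<in> space M. ?dev N w > e} \<le> measure M {w \<in> space M. ?dev N w \<ge> e}"
    for N using h_meas by (intro finite_measure_mono) auto
  have "eventually (\<lambda>N. measure M {w \<in> space M. ?dev N w > e}
      \<le> 2 * exp (-2 * real N * e\<^sup>2 / (b - a)\<^sup>2)) sequentially"
    using eventually_gt_at_top[of 0]
    by eventually_elim (rule order_trans[OF strict_le Hoeffding])
  then show "(\<lambda>N. measure M {w \<in> space M. ?dev N w > e}) \<longlonglongrightarrow> 0"
    by (intro tendsto_sandwich[OF _ _ tendsto_const bound_lim]) auto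
qed

lemma abs_divide_diff_le:
  fixes A B al be d e :: real
  assumes be: "be \<noteq> 0" and hA: "\<bar>A - al\<bar> \<le> d" and hB: "\<bar>B - be\<bar> \<le> d"
    and d_half: "d \<le> \<bar>be\<bar> / 2" and d_small: "d * (\<bar>be\<bar> + \<bar>al\<bar>) \<le> e * be\<^sup>2 / 2"
  shows "\<bar>A / B - al / be\<bar> \<le> e"
proof -
  have B: "\<bar>B\<bar> \<ge> \<bar>be\<bar> / 2" using hB d_half by linarith
  then have "B \<noteq> 0" using be by auto
  then have eq: "A / B - al / be = ((A - al) * be - al * (B - be)) / (B * be)"
    using be by (simp add: field_simps)
  have "\<bar>(A - al) * be - al * (B - be)\<bar> \<le> \<bar>A - al\<bar> * \<bar>be\<bar> + \<bar>al\<bar> * \<bar>B - be\<bar>"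
    by (metis abs_mult abs_triangle_ineq4)
  also have "\<dots> \<le> d * \<bar>be\<bar> + \<bar>al\<bar> * d"
    using hA hB by (intro add_mono mult_right_mono mult_left_mono) auto
  also have "\<dots> = d * (\<bar>be\<bar> + \<bar>al\<bar>)"
    by (simp add: algebra_simps)
  finally have num: "\<bar>(A - al) * be - al * (B - be)\<bar> \<le> e * be\<^sup>2 / 2"
    using d_small by linarith
  have den: "\<bar>B * be\<bar> \<ge> be\<^sup>2 / 2"
    using mult_right_mono[OF B abs_ge_zero[of be]] by (simp add: abs_mult power2_eq_square)
  have "\<bar>A / B - al / be\<bar> \<le> (e * be\<^sup>2 / 2) / (be\<^sup>2 / 2)"
    unfolding eq abs_divide using num den be order_trans[OF abs_ge_zero num] by (intro frac_le) auto
  also have "\<dots> = e" using be by simp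
  finally show ?thesis .
qed

lemma tendsto_in_prob_divide:
  fixes M :: "'w measure" and A B :: "nat \<Rightarrow> 'w \<Rightarrow> real"
  assumes "finite_measure M"
    and A_meas [measurable]: "\<And>N. A N \<in> borel_measurable M"
    and B_meas [measurable]: "\<And>N. B N \<in> borel_measurable M"
    and A: "tendsto_in_prob M A al" and B: "tendsto_in_prob M B be" and be: "be \<noteq> 0"
  shows "tendsto_in_prob M (\<lambda>N w. A N w / B N w) (al / be)"
  unfolding tendsto_in_prob_def
proof (intro allI impI)
  fix e :: real assume e: "e > 0"
  interpret finite_measure M by fact
  define d where "d = min (\<bar>be\<bar> / 2) (e * be\<^sup>2 / (2 * (\<bar>be\<bar> + \<bar>al\<bar>)))"
  have d: "d > 0" using be e by (simp add: d_def)
  have d_half: "d \<le> \<bar>be\<bar> / 2" unfolding d_def by (rule min.cobounded1)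
  have d_small: "d * (\<bar>be\<bar> + \<bar>al\<bar>) \<le> e * be\<^sup>2 / 2"
  proof -
    have "d * (\<bar>be\<bar> + \<bar>al\<bar>) \<le> e * be\<^sup>2 / (2 * (\<bar>be\<bar> + \<bar>al\<bar>)) * (\<bar>be\<bar> + \<bar>al\<bar>)"
      unfolding d_def by (intro mult_right_mono) auto
    also have "\<dots> = e * be\<^sup>2 / 2" using be by (simp add: field_simps)
    finally show ?thesis .
  qed
  let ?bad = "\<lambda>Z c N. {w \<in> space M. \<bar>Z N w - c\<bar> > d}"
  have "w \<in> ?bad A al N \<union> ?bad B be N"
    if w: "w \<in> {w \<in> space M. \<bar>A N w / B N w - al / be\<bar> > e}" for w N
  proof (rule ccontr)
    assume "w \<notin> ?bad A al N \<union> ?bad B be N"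
    with w have "\<bar>A N w - al\<bar> \<le> d" "\<bar>B N w - be\<bar> \<le> d" by auto
    from abs_divide_diff_le[OF be this d_half d_small] w show False by auto
  qed
  then have bound: "measure M {w \<in> space M. \<bar>A N w / B N w - al / be\<bar> > e}
      \<le> measure M (?bad A al N) + measure M (?bad B be N)" for N
    by (intro order_trans[OF finite_measure_mono measure_Un_le]) (auto simp del: Un_iff)
  have "(\<lambda>N. measure M (?bad A al N) + measure M (?bad B be N)) \<longlonglongrightarrow> 0"
    using tendsto_add[OF A[unfolded tendsto_in_prob_def, rule_format, OF d]
        B[unfolded tendsto_in_prob_def, rule_format, OF d]] by simp
  then show "(\<lambda>N. measure M {w \<in> space M. \<bar>A N w / B N w - al / be\<bar> > e}) \<longlonglongrightarrow> 0"
    by (rule tendsto_sandwich[rotated 2, OF tendsto_const]) (auto intro: always_eventually bound)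
qed

lemma cond_prob_S_bounds:
  assumes dens: "density_on_unit (u (gam x))" and J: "J \<in> sets borel"
  shows "cond_prob_S u gam J x \<in> {0..1}"
proof -
  let ?f = "u (gam x)"
  have nonneg: "\<And>s. 0 \<le> ?f s" and int: "set_integrable lborel {0..1} ?f"
    and total: "(LBINT s:{0..1}. ?f s) = 1"
    using dens unfolding density_on_unit_def by auto
  have int_J: "set_integrable lborel (J \<inter> {0..1}) ?f"
    by (rule set_integrable_subset[OF int]) (use J in auto)
  have "0 \<le> (LBINT s:(J \<inter> {0..1}). ?f s)"
    unfolding set_lebesgue_integral_def
    by (intro Bochner_Integration.integral_nonneg) (simp add: nonneg)
  moreover have "(LBINT s:(J \<inter> {0..1}). ?f s) \<le> (LBINT s:{0..1}. ?f s)"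
    using int_J int unfolding set_lebesgue_integral_def set_integrable_def
    by (intro Bochner_Integration.integral_mono) (auto simp: indicator_def nonneg)
  ultimately show ?thesis using total by (simp add: cond_prob_S_def)
qed

lemma cond_prob_S_UNIV:
  "density_on_unit (u (gam x)) \<Longrightarrow> cond_prob_S u gam UNIV x = 1"
  by (simp add: cond_prob_S_def density_on_unit_def)

lemma cond_prob_Cpos_eq_cond_prob_S: "cond_prob_Cpos u rho = cond_prob_S u rho {1/2..}"
proof -
  have "{1/2..} \<inter> {0..1} = {1/2..(1::real)}" by auto
  then show ?thesis by (simp add: fun_eq_iff cond_prob_Cpos_def cond_prob_S_def)
qed

lemma cond_prob_S_measurable:
  "gam \<in> measurable Xsp (count_space UNIV) \<Longrightarrow> cond_prob_S u gam J \<in> borel_measurable Xsp"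
  unfolding cond_prob_S_def by (erule measurable_compose[OF _ borel_measurable_count_space])

lemma measure_S_C_eq_integral:
  fixes M :: "'w measure" and Xsp :: "'x measure"
  assumes X_meas: "X \<in> measurable M Xsp"
    and joint: "\<And>A B D. A \<in> sets Xsp \<Longrightarrow> B \<in> sets borel \<Longrightarrow> D \<in> sets borel \<Longrightarrow>
        measure M {w \<in> space M. X w \<in> A \<and> S w \<in> B \<and> C w \<in> D} =
        (\<integral>x. indicator A x * (LBINT s:(B \<inter> {0..1}). u (gam x) s)
                            * (LBINT c:(D \<inter> {0..1}). u (rho x) c) \<partial>(distr M Xsp X))"
    and B: "B \<in> sets borel" and D: "D \<in> sets borel"
  shows "measure M {w \<in> space M. S w \<in> B \<and> C w \<in> D} =
    (\<integral>x. cond_prob_S u gam B x * cond_prob_S u rho D x \<partial>distr M Xsp X)"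
proof -
  have "{w \<in> space M. S w \<in> B \<and> C w \<in> D} = {w \<in> space M. X w \<in> space Xsp \<and> S w \<in> B \<and> C w \<in> D}"
    using measurable_space[OF X_meas] by auto
  also have "measure M \<dots> = (\<integral>x. indicator (space Xsp) x * cond_prob_S u gam B x
      * cond_prob_S u rho D x \<partial>distr M Xsp X)"
    unfolding cond_prob_S_def by (rule joint[OF sets.top B D])
  also have "\<dots> = (\<integral>x. cond_prob_S u gam B x * cond_prob_S u rho D x \<partial>distr M Xsp X)"
    by (rule Bochner_Integration.integral_cong) auto
  finally show ?thesis .
qed

lemma measure_bin_eq_integral:
  fixes M :: "'w measure" and Xsp :: "'x measure"
  assumes X_meas: "X \<in> measurable M Xsp"
    and joint: "\<And>A B D. A \<in> sets Xsp \<Longrightarrow> B \<in> sets borel \<Longrightarrow> D \<in> sets borel \<Longrightarrow>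
        measure M {w \<in> space M. X w \<in> A \<and> S w \<in> B \<and> C w \<in> D} =
        (\<integral>x. indicator A x * (LBINT s:(B \<inter> {0..1}). u (gam x) s)
                            * (LBINT c:(D \<inter> {0..1}). u (rho x) c) \<partial>(distr M Xsp X))"
    and J: "J \<in> sets borel" and dens_rho: "\<And>x. density_on_unit (u (rho x))"
  shows "measure M {w \<in> space M. S w \<in> J} = (\<integral>x. cond_prob_S u gam J x \<partial>distr M Xsp X)"
    and "measure M {w \<in> space M. S w \<in> J \<and> 1/2 \<le> C w} =
      (\<integral>x. cond_prob_S u gam J x * cond_prob_Cpos u rho x \<partial>distr M Xsp X)"
proof -
  have "measure M {w \<in> space M. S w \<in> J \<and> C w \<in> UNIV} =
      (\<integral>x. cond_prob_S u gam J x * cond_prob_S u rho UNIV x \<partial>distr M Xsp X)"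
    by (rule measure_S_C_eq_integral[OF X_meas joint J sets.top[of borel, unfolded space_borel]])
  then show "measure M {w \<in> space M. S w \<in> J} = (\<integral>x. cond_prob_S u gam J x \<partial>distr M Xsp X)"
    by (simp add: cond_prob_S_UNIV[of u rho, OF dens_rho])
  have "measure M {w \<in> space M. S w \<in> J \<and> C w \<in> {1/2..}} =
      (\<integral>x. cond_prob_S u gam J x * cond_prob_Cpos u rho x \<partial>distr M Xsp X)"
    unfolding cond_prob_Cpos_eq_cond_prob_S
    by (rule measure_S_C_eq_integral[OF X_meas joint J atLeast_borel])
  then show "measure M {w \<in> space M. S w \<in> J \<and> 1/2 \<le> C w} =
      (\<integral>x. cond_prob_S u gam J x * cond_prob_Cpos u rho x \<partial>distr M Xsp X)"
    by simp
qed

lemma cond_exp_Y_given_bin_eq_measure_ratio: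
  "cond_exp_Y_given_bin M S C J =
     measure M {w \<in> space M. S w \<in> J \<and> 1/2 \<le> C w} / measure M {w \<in> space M. S w \<in> J}"
proof -
  have "(\<integral>w. indicator {w \<in> space M. S w \<in> J} w * label_Y C w \<partial>M) =
      (\<integral>w. indicator {w \<in> space M. S w \<in> J \<and> 1/2 \<le> C w} w \<partial>M)"
    by (rule Bochner_Integration.integral_cong) (auto simp: indicator_def label_Y_def)
  also have "\<dots> = measure M {w \<in> space M. S w \<in> J \<and> 1/2 \<le> C w}"
    by (simp add: Int_absorb2)
  finally show ?thesis by (simp add: cond_exp_Y_given_bin_def)
qed

theorem mainTheorem2:
  fixes M :: "'w measure" and Xsp :: "'x measure"
    and X :: "'w \<Rightarrow> 'x" and S C :: "'w \<Rightarrow> real"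
    and Xs :: "nat \<Rightarrow> 'w \<Rightarrow> 'x"
    and u :: "nat \<Rightarrow> real \<Rightarrow> real" and K :: nat
    and gam rho :: "'x \<Rightarrow> nat"
    and I :: "nat \<Rightarrow> real set" and Mb m :: nat
  assumes P: "prob_space M"
    and dens: "\<And>k. k \<in> {1..K} \<Longrightarrow> density_on_unit (u k)"
    and gam_range: "\<And>x. gam x \<in> {1..K}" and rho_range: "\<And>x. rho x \<in> {1..K}"
    and gam_meas: "gam \<in> measurable Xsp (count_space UNIV)"
    and rho_meas: "rho \<in> measurable Xsp (count_space UNIV)"
    and X_meas: "X \<in> measurable M Xsp"
    and S_meas: "S \<in> borel_measurable M" and C_meas: "C \<in> borel_measurable M"
    and S_range: "\<And>w. w \<in> space M \<Longrightarrow> S w \<in> {0..1}"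
    and C_range: "\<And>w. w \<in> space M \<Longrightarrow> C w \<in> {0..1}"
    and joint: "\<And>A B D. A \<in> sets Xsp \<Longrightarrow> B \<in> sets borel \<Longrightarrow> D \<in> sets borel \<Longrightarrow>
        measure M {w \<in> space M. X w \<in> A \<and> S w \<in> B \<and> C w \<in> D} =
        (\<integral>x. indicator A x * (LBINT s:(B \<inter> {0..1}). u (gam x) s)
                            * (LBINT c:(D \<inter> {0..1}). u (rho x) c) \<partial>(distr M Xsp X))"
    and Xs_meas: "\<And>n. Xs n \<in> measurable M Xsp"
    and Xs_indep: "prob_space.indep_vars M (\<lambda>_. Xsp) Xs UNIV"
    and Xs_dist: "\<And>n. distr M Xsp (Xs n) = distr M Xsp X"
    and I_int: "\<And>i. i < Mb \<Longrightarrow> is_interval (I i)"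
    and I_disj: "\<And>i j. i < Mb \<Longrightarrow> j < Mb \<Longrightarrow> i \<noteq> j \<Longrightarrow> I i \<inter> I j = {}"
    and I_cover: "(\<Union>i<Mb. I i) = {0..1}"
    and m_lt: "m < Mb"
    and m_pos: "measure M {w \<in> space M. S w \<in> I m} > 0"
  shows "\<forall>e>0. (\<lambda>N. measure M {w \<in> space M.
            \<bar>r_hat u gam rho (I m) (\<lambda>n. Xs n w) N - cond_exp_Y_given_bin M S C (I m)\<bar> > e})
          \<longlonglongrightarrow> 0"
proof -
  let ?a = "cond_prob_S u gam (I m)" and ?b = "cond_prob_Cpos u rho" and ?D = "distr M Xsp X"
  note b_eq = cond_prob_Cpos_eq_cond_prob_S[of u rho]
  have I_m: "I m \<in> sets borel"
    using real_interval_borel_measurable I_int m_lt by blast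
  have a_meas [measurable]: "?a \<in> borel_measurable Xsp"
    by (rule cond_prob_S_measurable[OF gam_meas])
  have b_meas [measurable]: "?b \<in> borel_measurable Xsp"
    unfolding b_eq by (rule cond_prob_S_measurable[OF rho_meas])
  note [measurable] = Xs_meas
  have a_range: "?a x \<in> {0..1}" for x
    by (rule cond_prob_S_bounds[of u gam x, OF dens[OF gam_range] I_m])
  have b_range: "?b x \<in> {0..1}" for x
    unfolding b_eq by (rule cond_prob_S_bounds[of u rho x, OF dens[OF rho_range]]) simp
  have ab_range: "?a x * ?b x \<in> {0..1}" for x
    using a_range[of x] b_range[of x] by (simp add: mult_le_one)
  have bin: "measure M {w \<in> space M. S w \<in> I m} = (\<integral>x. ?a x \<partial>?D)"
    by (rule measure_bin_eq_integral(1)[OF X_meas joint I_m dens[OF rho_range]])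
  have bin_Y: "measure M {w \<in> space M. S w \<in> I m \<and> 1/2 \<le> C w} = (\<integral>x. ?a x * ?b x \<partial>?D)"
    by (rule measure_bin_eq_integral(2)[OF X_meas joint I_m dens[OF rho_range]])
  have num: "tendsto_in_prob M (\<lambda>N w. (\<Sum>n<N. ?a (Xs n w) * ?b (Xs n w)) / real N) (\<integral>x. ?a x * ?b x \<partial>?D)"
    by (intro tendsto_in_prob_sample_mean[where h = "\<lambda>x. ?a x * ?b x" and a = 0 and b = 1,
        OF P X_meas Xs_meas Xs_indep Xs_dist])
       (use borel_measurable_times[OF a_meas b_meas] ab_range in auto)
  have den: "tendsto_in_prob M (\<lambda>N w. (\<Sum>n<N. ?a (Xs n w)) / real N) (\<integral>x. ?a x \<partial>?D)"
    by (intro tendsto_in_prob_sample_mean[where h = ?a and a = 0 and b = 1,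
        OF P X_meas Xs_meas Xs_indep Xs_dist]) (use a_meas a_range in auto)
  have "tendsto_in_prob M (\<lambda>N w. (\<Sum>n<N. ?a (Xs n w) * ?b (Xs n w)) / real N / ((\<Sum>n<N. ?a (Xs n w)) / real N))
      ((\<integral>x. ?a x * ?b x \<partial>?D) / (\<integral>x. ?a x \<partial>?D))"
    by (intro tendsto_in_prob_divide[OF prob_space.finite_measure[OF P] _ _ num den])
       (measurable, measurable, use m_pos bin in simp)
  then show ?thesis
    unfolding cond_exp_Y_given_bin_eq_measure_ratio bin bin_Y tendsto_in_prob_def
    by (simp add: r_hat_def)
qed

end
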